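(* Let $d\ge1$ and $L\ge2$ be integers and $W_1,\dots,W_L\in\mathbb{R}^{d\times d}$. Let $\alpha=\max\{\max_{1\le l\le L-1}\|W_l\|_2,\,1\}$, $\beta=\|W_L\|_2$, and $\phi=\max\{\|W_{L:1}\|_2,\,e/\sqrt{L},\,1\}$. Let $D_l=W_{l+1}^\intercal W_{l+1}-W_lW_l^\intercal$ for $l=1,\dots,L-1$, and suppose $\|D_l\|_2\le\delta$ for $l=1,\dots,L-2$ and $\|I+D_{L-1}\|_2\le\varepsilon$, where $\delta\le(2L^3\phi^2)^{-1}$ and $\varepsilon\le(4L^2)^{-1}$. Then $$\alpha^{2(L-1)}<L\phi^2\qquad\text{and}\qquad\alpha^{2(L-1)}\beta^2<2\phi^2.$$
   Context: $W_{L:1}=W_LW_{L-1}\cdots W_1$. $\|\cdot\|_2$ is the spectral norm; $e$ is Euler's number. *)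

theory Defs
  imports "HOL-Analysis.Analysis"
begin

definition spec_norm :: "real^'n^'n \<Rightarrow> real" where
  "spec_norm A = onorm (\<lambda>x. A *v x)"

fun prod_mats :: "(nat \<Rightarrow> real^'n^'n) \<Rightarrow> nat \<Rightarrow> real^'n^'n" where
  "prod_mats W 0 = mat 1"
| "prod_mats W (Suc k) = W (Suc k) ** prod_mats W k"

end

(*
  Write b = \<parallel>W_L\<parallel>^2 and c = \<epsilon> + L max(\<delta>,0).  Each balance condition compares
  \<parallel>W_(l+1) x\<parallel>^2 with \<parallel>W_l^T x\<parallel>^2, so the layer norms can grow by at most \<delta> going down
  the network and \<parallel>W_(L-1)\<parallel>^2 \<le> 1 + b + \<epsilon>; hence \<alpha>^2 \<le> 1 + b + c.  Conversely, take a
  unit y with \<parallel>W_L^T y\<parallel>^2 = b and let N_k be the squared norm of W_(L-k+1)^T ... W_L^T y.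
  Cauchy-Schwarz and the balance conditions give N_k^2 \<le> N_(k+1) N_(k-1) + \<delta> N_k N_(k-1),
  so the ratios N_(k+1)/N_k start at 1 + b - \<epsilon> and drop by at most \<delta> per step; as
  N_L \<le> \<parallel>W_(L:1)\<parallel>^2 \<le> \<phi>^2 this yields b (1 + b - c)^(L-1) \<le> \<phi>^2.  Because c = O(L^-2),
  (1 + b + c)^(L-1) < 2 (1 + b - c)^(L-1), which gives both claims; for the first, when Lb < 2
  one uses instead (1 + b + c)^(L-1) < e^2 \<le> L \<phi>^2.
*)
theory Submission
  imports Defs
begin

lemma norm_mult_le_spec_norm: "norm (A *v x) \<le> spec_norm A * norm x"
  unfolding spec_norm_def by (rule onorm) simp

lemma spec_norm_nonneg: "0 \<le> spec_norm A"
  unfolding spec_norm_def by (rule onorm_pos_le) simp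

lemma spec_norm_attained: "\<exists>x::real^'n. norm x = 1 \<and> norm ((A::real^'n^'n) *v x) = spec_norm A"
proof -
  have "sphere (0::real^'n) 1 \<noteq> {}"
    by simp
  moreover have "continuous_on (sphere 0 1) (\<lambda>x. norm (A *v x))"
    by (intro continuous_intros linear_continuous_on) simp
  ultimately obtain x where x: "x \<in> sphere 0 1"
    and x_max: "\<And>y. y \<in> sphere 0 1 \<Longrightarrow> norm (A *v y) \<le> norm (A *v x)"
    using continuous_attains_sup[of "sphere 0 1"] by (metis compact_sphere)
  have "norm (A *v y) \<le> norm (A *v x) * norm y" for y
  proof (cases "y = 0")
    case False
    have "norm (A *v ((1 / norm y) *\<^sub>R y)) \<le> norm (A *v x)"
      using False by (intro x_max) simp
    then show ?thesis
      using False by (simp add: matrix_vector_mult_scaleR divide_le_eq mult.commute)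
  qed simp
  then have "spec_norm A \<le> norm (A *v x)"
    unfolding spec_norm_def by (rule onorm_le)
  moreover have "norm (A *v x) \<le> spec_norm A"
    using norm_mult_le_spec_norm[of A x] x by simp
  ultimately show ?thesis
    using x by (intro exI[of _ x]) simp
qed

lemma spec_norm_sq_le:
  assumes "\<And>x. (norm ((A::real^'n^'n) *v x))\<^sup>2 \<le> c * (norm x)\<^sup>2"
  shows "(spec_norm A)\<^sup>2 \<le> c"
proof -
  obtain x where "norm x = 1" and "norm (A *v x) = spec_norm A"
    using spec_norm_attained by blast
  with assms[of x] show ?thesis by simp
qed

lemma inner_transpose_mult: "inner u ((A::real^'n^'n) *v v) = inner (transpose A *v u) v"
  by (metis dot_lmul_matrix transpose_matrix_vector)

lemma inner_transpose_mult_self: "inner x ((transpose A ** A) *v x) = (norm ((A::real^'n^'n) *v x))\<^sup>2"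
proof -
  have "inner x ((transpose A ** A) *v x) = inner (A *v x) (A *v x)"
    using inner_transpose_mult[of x "transpose A" "A *v x"] by (simp add: matrix_vector_mul_assoc)
  then show ?thesis by (simp add: power2_norm_eq_inner)
qed

lemma norm_transpose_mult_sq_le:
  "(norm (transpose B *v g))\<^sup>2 \<le> norm g * norm ((B::real^'n^'n) *v (transpose B *v g))"
proof -
  have "(norm (transpose B *v g))\<^sup>2 = inner g (B *v (transpose B *v g))"
    using inner_transpose_mult[of g B] by (simp add: power2_norm_eq_inner)
  also have "\<dots> \<le> norm g * norm (B *v (transpose B *v g))"
    by (rule norm_cauchy_schwarz)
  finally show ?thesis .
qed

lemma spec_norm_transpose: "spec_norm (transpose (A::real^'n^'n)) = spec_norm A"
proof -
  have "spec_norm (transpose A) \<le> spec_norm A" for A :: "real^'n^'n"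
  proof -
    have "(norm (transpose A *v x))\<^sup>2 \<le> (spec_norm A)\<^sup>2 * (norm x)\<^sup>2" for x
    proof -
      have "(norm (transpose A *v x))\<^sup>2 \<le> norm x * norm (A *v (transpose A *v x))"
        by (rule norm_transpose_mult_sq_le)
      also have "\<dots> \<le> norm x * (spec_norm A * norm (transpose A *v x))"
        by (simp add: mult_left_mono norm_mult_le_spec_norm)
      finally have "norm (transpose A *v x) \<le> spec_norm A * norm x"
        by (cases "norm (transpose A *v x) = 0")
           (auto simp: power2_eq_square spec_norm_nonneg mult.assoc mult.left_commute)
      then show ?thesis
        by (metis norm_ge_zero power_mono power_mult_distrib)
    qed
    then have "(spec_norm (transpose A))\<^sup>2 \<le> (spec_norm A)\<^sup>2"
      by (rule spec_norm_sq_le)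
    then show ?thesis
      using power2_le_imp_le spec_norm_nonneg by blast
  qed
  from this[of A] this[of "transpose A"] show ?thesis by simp
qed

lemma spec_norm_sq_le_of_dominated:
  fixes A B :: "real^'n^'n"
  assumes "\<And>x. (norm (transpose A *v x))\<^sup>2 \<le> (norm (B *v x))\<^sup>2 + e * (norm x)\<^sup>2"
  shows "(spec_norm A)\<^sup>2 \<le> (spec_norm B)\<^sup>2 + e"
proof -
  have "(norm (transpose A *v x))\<^sup>2 \<le> ((spec_norm B)\<^sup>2 + e) * (norm x)\<^sup>2" for x
  proof -
    have "(norm (B *v x))\<^sup>2 \<le> (spec_norm B * norm x)\<^sup>2"
      using norm_mult_le_spec_norm by (intro power_mono) auto
    then show ?thesis
      using assms[of x] by (simp add: power_mult_distrib algebra_simps)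
  qed
  then have "(spec_norm (transpose A))\<^sup>2 \<le> (spec_norm B)\<^sup>2 + e"
    by (rule spec_norm_sq_le)
  then show ?thesis by (simp add: spec_norm_transpose)
qed

lemma abs_inner_mult_le: "\<bar>inner x (M *v x)\<bar> \<le> spec_norm M * (norm x)\<^sup>2"
proof -
  have "\<bar>inner x (M *v x)\<bar> \<le> norm x * norm (M *v x)" by (rule Cauchy_Schwarz_ineq2)
  also have "\<dots> \<le> norm x * (spec_norm M * norm x)" by (simp add: mult_left_mono norm_mult_le_spec_norm)
  finally show ?thesis by (simp add: power2_eq_square algebra_simps)
qed

lemma inner_balance_form:
  fixes A B :: "real^'n^'n"
  shows "inner x ((transpose B ** B - A ** transpose A) *v x) = (norm (B *v x))\<^sup>2 - (norm (transpose A *v x))\<^sup>2"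
  using inner_transpose_mult_self[of x B] inner_transpose_mult_self[of x "transpose A"]
  by (simp add: matrix_vector_mult_diff_rdistrib inner_diff_right)

lemma inner_shifted_form:
  "inner x ((mat 1 + M) *v x) = (norm (x::real^'n))\<^sup>2 + inner x (M *v x)"
  by (simp add: matrix_vector_mult_add_rdistrib inner_add_right power2_norm_eq_inner)

lemma ratio_recurrence_lower_bound:
  fixes N :: "nat \<Rightarrow> real"
  assumes N1: "0 < N 1" and N2: "r * N 1 \<le> N 2"
    and d: "0 \<le> d" and s: "0 < s" "s \<le> r - real n * d"
    and rec: "\<And>k. 2 \<le> k \<Longrightarrow> k \<le> n \<Longrightarrow> (N k)\<^sup>2 \<le> N (k+1) * N (k-1) + d * N k * N (k-1)"
  shows "N 1 * s ^ n \<le> N (n+1)"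
proof -
  have ratio_ge_s: "s \<le> r - real (k-1) * d" if "k \<le> n" for k
  proof -
    have "real (k-1) * d \<le> real n * d"
      using that d by (intro mult_right_mono) auto
    then show ?thesis using s(2) by linarith
  qed
  have ratio: "0 < N k \<and> (r - real (k-1) * d) * N k \<le> N (k+1)" if "1 \<le> k" "k \<le> n" for k
    using that
  proof (induction k)
    case (Suc k)
    show ?case
    proof (cases "k = 0")
      case True
      then show ?thesis using N1 N2 by (simp add: numeral_2_eq_2)
    next
      case False
      with Suc have IH: "0 < N k" "(r - real (k-1) * d) * N k \<le> N (k+1)" by auto
      have "0 < (r - real (k-1) * d) * N k"
        using IH(1) ratio_ge_s[of k] Suc.prems s(1) by simp
      with IH(2) have pos: "0 < N (k+1)" by linarith
      have "(r - real (k-1) * d) * N k * N (k+1) \<le> (N (k+1))\<^sup>2"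
        using IH(2) pos by (simp add: power2_eq_square mult_right_mono)
      also have "\<dots> \<le> N (k+2) * N k + d * N (k+1) * N k"
        using rec[of "k+1"] Suc.prems False by simp
      finally have "(r - real k * d) * N (k+1) * N k \<le> N (k+2) * N k"
        using False by (simp add: of_nat_diff algebra_simps)
      then show ?thesis using IH(1) pos by simp
    qed
  qed simp
  have "N 1 * s ^ (k-1) \<le> N k" if "1 \<le> k" "k \<le> n + 1" for k
    using that
  proof (induction k)
    case (Suc k)
    show ?case
    proof (cases "k = 0")
      case False
      with Suc have IH: "N 1 * s ^ (k-1) \<le> N k" by simp
      have "N 1 * s ^ k = s * (N 1 * s ^ (k-1))"
        using False by (cases k) auto
      also have "\<dots> \<le> (r - real (k-1) * d) * N k"
        using IH ratio_ge_s[of k] Suc.prems N1 s(1) ratio[of k] False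
        by (intro mult_mono) simp_all
      also have "\<dots> \<le> N (Suc k)"
        using ratio[of k] Suc.prems False by simp
      finally show ?thesis by simp
    qed simp
  qed simp
  from this[of "n+1"] show ?thesis by simp
qed

fun back_chain :: "(nat \<Rightarrow> real^'n^'n) \<Rightarrow> nat \<Rightarrow> real^'n \<Rightarrow> nat \<Rightarrow> real^'n" where
  "back_chain W L y 0 = y"
| "back_chain W L y (Suc k) = transpose (W (L - k)) *v back_chain W L y k"

lemma transpose_prod_mats_mult_back_chain:
  "k \<le> L \<Longrightarrow> transpose (prod_mats W L) *v y = transpose (prod_mats W (L - k)) *v back_chain W L y k"
proof (induction k)
  case (Suc k)
  have "L - k = Suc (L - Suc k)"
    using Suc.prems by simp
  then have "prod_mats W (L - k) = W (L - k) ** prod_mats W (L - Suc k)"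
    by (metis prod_mats.simps(2))
  with Suc show ?case
    by (simp only: matrix_transpose_mul matrix_vector_mul_assoc[symmetric] back_chain.simps)
qed simp

locale near_balanced =
  fixes W :: "nat \<Rightarrow> real^'n^'n" and L :: nat and \<delta> \<epsilon> :: real
  assumes two_le_L: "2 \<le> L"
    and balanced: "\<And>l. 1 \<le> l \<Longrightarrow> l \<le> L - 2 \<Longrightarrow>
          spec_norm (transpose (W (l+1)) ** W (l+1) - W l ** transpose (W l)) \<le> \<delta>"
    and last_balanced: "spec_norm (mat 1 + (transpose (W L) ** W L - W (L-1) ** transpose (W (L-1)))) \<le> \<epsilon>"
begin

lemma eps_nonneg: "0 \<le> \<epsilon>"
  using last_balanced spec_norm_nonneg order_trans by blast

lemma layer_gap:
  assumes "1 \<le> l" "l \<le> L - 2"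
  shows "\<bar>(norm (W (l+1) *v x))\<^sup>2 - (norm (transpose (W l) *v x))\<^sup>2\<bar> \<le> \<delta> * (norm x)\<^sup>2"
proof -
  have "\<bar>inner x ((transpose (W (l+1)) ** W (l+1) - W l ** transpose (W l)) *v x)\<bar> \<le> \<delta> * (norm x)\<^sup>2"
    using abs_inner_mult_le balanced[OF assms] mult_right_mono[OF _ zero_le_power2] order_trans by blast
  then show ?thesis by (simp only: inner_balance_form)
qed

lemma last_layer_gap:
  "\<bar>(norm x)\<^sup>2 + (norm (W L *v x))\<^sup>2 - (norm (transpose (W (L-1)) *v x))\<^sup>2\<bar> \<le> \<epsilon> * (norm x)\<^sup>2"
proof -
  have "\<bar>inner x ((mat 1 + (transpose (W L) ** W L - W (L-1) ** transpose (W (L-1)))) *v x)\<bar>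
      \<le> \<epsilon> * (norm x)\<^sup>2"
    using abs_inner_mult_le last_balanced mult_right_mono[OF _ zero_le_power2] order_trans by blast
  then show ?thesis
    unfolding inner_shifted_form inner_balance_form by (simp only: add_diff_eq)
qed

lemma spec_norm_layer_sq_le:
  assumes "1 \<le> l" "l \<le> L - 2"
  shows "(spec_norm (W l))\<^sup>2 \<le> (spec_norm (W (l+1)))\<^sup>2 + \<delta>"
proof -
  have "(norm (transpose (W l) *v x))\<^sup>2 \<le> (norm (W (l+1) *v x))\<^sup>2 + \<delta> * (norm x)\<^sup>2" for x
    using layer_gap[OF assms, of x] by (simp add: abs_le_iff)
  then show ?thesis by (rule spec_norm_sq_le_of_dominated)
qed

lemma spec_norm_last_sq_le: "(spec_norm (W (L-1)))\<^sup>2 \<le> 1 + (spec_norm (W L))\<^sup>2 + \<epsilon>"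
  using spec_norm_sq_le_of_dominated[of "W (L-1)" "W L" "1 + \<epsilon>"] last_layer_gap
  by (simp add: abs_le_iff algebra_simps)

lemma spec_norm_layer_sq_bound:
  assumes "1 \<le> l" "l \<le> L - 1"
  shows "(spec_norm (W l))\<^sup>2 \<le> 1 + (spec_norm (W L))\<^sup>2 + \<epsilon> + real (L - 1 - l) * max \<delta> 0"
proof -
  have "(spec_norm (W (L - 1 - k)))\<^sup>2 \<le> 1 + (spec_norm (W L))\<^sup>2 + \<epsilon> + real k * max \<delta> 0"
    if "k \<le> L - 2" for k
    using that
  proof (induction k)
    case 0
    then show ?case using spec_norm_last_sq_le by simp
  next
    case (Suc k)
    then have "(spec_norm (W (L - 1 - Suc k)))\<^sup>2 \<le> (spec_norm (W (L - 1 - k)))\<^sup>2 + \<delta>"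
      using spec_norm_layer_sq_le[of "L - 1 - Suc k"] by (simp add: Suc_diff_Suc)
    with Suc show ?case by (simp add: algebra_simps)
  qed
  from this[of "L - 1 - l"] assms show ?thesis by simp
qed

lemma max_spec_norm_sq_le:
  "(max (Max ((\<lambda>l. spec_norm (W l)) ` {1..L-1})) 1)\<^sup>2 \<le> 1 + (spec_norm (W L))\<^sup>2 + \<epsilon> + real L * max \<delta> 0"
proof -
  obtain l where l: "l \<in> {1..L-1}" and "Max ((\<lambda>l. spec_norm (W l)) ` {1..L-1}) = spec_norm (W l)"
    using Max_in[of "(\<lambda>l. spec_norm (W l)) ` {1..L-1}"] two_le_L by fastforce
  moreover have "(spec_norm (W l))\<^sup>2 \<le> 1 + (spec_norm (W L))\<^sup>2 + \<epsilon> + real L * max \<delta> 0"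
    using spec_norm_layer_sq_bound[of l] l mult_right_mono[of "real (L - 1 - l)" "real L" "max \<delta> 0"]
    by fastforce
  ultimately show ?thesis
    using eps_nonneg spec_norm_nonneg by (simp add: max_def)
qed

lemma back_chain_second_step:
  assumes "norm y = 1"
  shows "(1 + (norm (back_chain W L y 1))\<^sup>2 - \<epsilon>) * (norm (back_chain W L y 1))\<^sup>2
    \<le> (norm (back_chain W L y 2))\<^sup>2"
proof -
  define h where "h = back_chain W L y 1"
  have h: "h = transpose (W L) *v y" and h2: "back_chain W L y 2 = transpose (W (L-1)) *v h"
    unfolding h_def by (simp_all add: numeral_2_eq_2)
  have "(norm h)\<^sup>2 \<le> norm (W L *v h)"
    using norm_transpose_mult_sq_le[of "W L" y] assms by (simp add: h)
  then have "((norm h)\<^sup>2)\<^sup>2 \<le> (norm (W L *v h))\<^sup>2"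
    by (intro power_mono) auto
  with last_layer_gap[of h] show ?thesis
    unfolding h_def[symmetric] h2 by (simp add: power2_eq_square algebra_simps)
qed

lemma back_chain_recurrence:
  fixes y :: "real^'n"
  assumes "2 \<le> k" "k \<le> L - 1"
  defines "N \<equiv> \<lambda>k. (norm (back_chain W L y k))\<^sup>2"
  shows "(N k)\<^sup>2 \<le> N (k+1) * N (k-1) + \<delta> * N k * N (k-1)"
proof -
  define l where "l = L - k"
  have l: "1 \<le> l" "l \<le> L - 2" using assms unfolding l_def by auto
  define g where "g = back_chain W L y (k-1)"
  have h: "back_chain W L y k = transpose (W (l+1)) *v g"
    using assms unfolding g_def l_def by (cases k) (auto simp: Suc_diff_Suc)
  have h1: "back_chain W L y (k+1) = transpose (W l) *v back_chain W L y k"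
    unfolding l_def by simp
  have "N k \<le> norm g * norm (W (l+1) *v back_chain W L y k)"
    unfolding N_def h by (rule norm_transpose_mult_sq_le)
  then have "(N k)\<^sup>2 \<le> (norm g * norm (W (l+1) *v back_chain W L y k))\<^sup>2"
    by (intro power_mono) (simp_all add: N_def)
  also have "\<dots> = N (k-1) * (norm (W (l+1) *v back_chain W L y k))\<^sup>2"
    unfolding N_def g_def by (simp add: power_mult_distrib)
  also have "\<dots> \<le> N (k-1) * (N (k+1) + \<delta> * N k)"
    using layer_gap[OF l, of "back_chain W L y k"] unfolding N_def h1
    by (intro mult_left_mono) auto
  finally show ?thesis by (simp add: algebra_simps)
qed

lemma spec_norm_prod_mats_lower:
  assumes s: "0 < s" "s \<le> 1 + (spec_norm (W L))\<^sup>2 - \<epsilon> - real L * max \<delta> 0"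
  shows "(spec_norm (W L))\<^sup>2 * s ^ (L-1) \<le> (spec_norm (prod_mats W L))\<^sup>2"
proof (cases "spec_norm (W L) = 0")
  case False
  obtain y where y: "norm y = 1" "norm (transpose (W L) *v y) = spec_norm (W L)"
    using spec_norm_attained[of "transpose (W L)"] spec_norm_transpose by metis
  define N where "N k = (norm (back_chain W L y k))\<^sup>2" for k
  have N1: "N 1 = (spec_norm (W L))\<^sup>2" unfolding N_def using y by simp
  have "N 1 * s ^ (L-1) \<le> N (L-1+1)"
  proof (rule ratio_recurrence_lower_bound[where d = "max \<delta> 0"])
    show "0 < N 1" using N1 False spec_norm_nonneg by simp
    show "(1 + (spec_norm (W L))\<^sup>2 - \<epsilon>) * N 1 \<le> N 2"
      using back_chain_second_step[OF y(1)] N1 unfolding N_def by simp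
    show "s \<le> 1 + (spec_norm (W L))\<^sup>2 - \<epsilon> - real (L - 1) * max \<delta> 0"
      using s(2) two_le_L by (simp add: of_nat_diff algebra_simps)
    show "(N k)\<^sup>2 \<le> N (k+1) * N (k-1) + max \<delta> 0 * N k * N (k-1)"
      if "2 \<le> k" "k \<le> L - 1" for k
      using back_chain_recurrence[OF that, of y] mult_right_mono[of \<delta> "max \<delta> 0" "N k * N (k-1)"]
      unfolding N_def by (simp add: mult.assoc)
  qed (use s two_le_L in auto)
  moreover have "N L \<le> (spec_norm (prod_mats W L))\<^sup>2"
  proof -
    have "back_chain W L y L = transpose (prod_mats W L) *v y"
      using transpose_prod_mats_mult_back_chain[of L L W y] by (simp del: transpose_matrix_vector)
    then have "norm (back_chain W L y L) \<le> spec_norm (prod_mats W L)"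
      using norm_mult_le_spec_norm[of "transpose (prod_mats W L)" y] y(1)
      by (simp del: transpose_matrix_vector add: spec_norm_transpose)
    then show ?thesis unfolding N_def by (intro power_mono) auto
  qed
  ultimately show ?thesis using N1 two_le_L by simp
qed (simp add: spec_norm_nonneg)

end

lemma one_plus_pow_le_exp:
  assumes "0 \<le> 1 + x"
  shows "(1 + x :: real) ^ n \<le> exp (real n * x)"
proof -
  have "(1 + x) ^ n \<le> (exp x) ^ n"
    using assms by (intro power_mono) (simp_all add: add.commute)
  then show ?thesis by (simp add: exp_of_nat_mult)
qed

lemma pow_add_lt_two_mult_pow_diff:
  fixes b c :: real
  assumes b: "0 \<le> b" and c: "0 \<le> c" "16 * c \<le> 3" "16 * (real n * c) \<le> 3"
  shows "(1 + b + c) ^ n < 2 * (1 + b - c) ^ n"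
proof -
  \<comment> \<open>(1 + b + c) / (1 + b - c) \<le> (1 + c) / (1 - c) = 1 + x\<close>
  define x where "x = 2 * c / (1 - c)"
  have "0 \<le> x" unfolding x_def using c by simp
  have "1 + b + c \<le> (1 + b - c) * (1 + x)"
  proof -
    have "x * (1 - c) \<le> x * (1 + b - c)"
      using \<open>0 \<le> x\<close> b by (intro mult_left_mono) auto
    moreover have "x * (1 - c) = 2 * c" unfolding x_def using c by simp
    ultimately show ?thesis by (simp add: algebra_simps)
  qed
  then have "(1 + b + c) ^ n \<le> (1 + b - c) ^ n * (1 + x) ^ n"
    unfolding power_mult_distrib[symmetric] using b c by (intro power_mono) auto
  also have "\<dots> < (1 + b - c) ^ n * 2"
  proof -
    have "real n * x = 2 * (real n * c) / (1 - c)" unfolding x_def by simp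
    also have "\<dots> \<le> 2 * (3/16) / (13/16)"
      using c by (intro frac_le) auto
    finally have "exp (real n * x) < exp (1/2)" by simp
    then have "(1 + x) ^ n < exp (1/2)"
      using one_plus_pow_le_exp[of x n] \<open>0 \<le> x\<close> by linarith
    then have "(1 + x) ^ n < 2" using exp_half_le2 by linarith
    moreover have "0 < (1 + b - c) ^ n" using b c by simp
    ultimately show ?thesis by simp
  qed
  finally show ?thesis by simp
qed

lemma slack_bounds:
  assumes L: "2 \<le> L" and c: "0 \<le> c" "4 * (real L)\<^sup>2 * c \<le> 3"
  shows "16 * c \<le> 3" "16 * (real (L-1) * c) \<le> 3"
proof -
  have "16 * c \<le> 4 * (real L)\<^sup>2 * c"
    using L c(1) power_mono[of 2 "real L" 2] by (intro mult_right_mono) auto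
  then show "16 * c \<le> 3" using c(2) by linarith
  have "16 * real (L-1) \<le> 4 * (real L)\<^sup>2"
    using L zero_le_power2[of "real L - 2"] by (simp add: of_nat_diff power2_eq_square algebra_simps)
  then have "16 * real (L-1) * c \<le> 4 * (real L)\<^sup>2 * c"
    using c(1) by (intro mult_right_mono) auto
  then show "16 * (real (L-1) * c) \<le> 3"
    using c(2) by (simp only: mult.assoc)
qed

lemma pow_lt_exp_two:
  assumes L: "2 \<le> L" and b: "0 \<le> b" "real L * b < 2" and c: "0 \<le> c" "4 * (real L)\<^sup>2 * c \<le> 3"
  shows "(1 + b + c) ^ (L-1) < exp 2"
proof -
  have "real (L-1) * (real L * b) \<le> real (L-1) * 2"
    using b(2) by (intro mult_left_mono) auto
  moreover have "real (L-1) * (real L * c) \<le> real L * (real L * c)"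
    using c(1) by (intro mult_right_mono) auto
  moreover have "real L * (real L * c) \<le> 3/4"
    using c(2) by (simp add: power2_eq_square algebra_simps)
  ultimately have "real L * (real (L-1) * (b + c)) < real L * 2"
    using L by (simp add: of_nat_diff algebra_simps)
  then have "real (L-1) * (b + c) < 2"
    using L mult_less_cancel_left_pos[of "real L"] by simp
  then have "exp (real (L-1) * (b + c)) < exp 2" by simp
  then have "(1 + (b + c)) ^ (L-1) < exp 2"
    using one_plus_pow_le_exp[of "b + c" "L-1"] b(1) c(1) by linarith
  then show ?thesis by (simp add: add.assoc)
qed

lemma weight_growth_bounds:
  fixes L :: nat and a b c \<phi> :: real
  assumes L: "2 \<le> L" and b: "0 \<le> b" and c: "0 \<le> c" "4 * (real L)\<^sup>2 * c \<le> 3"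
    and \<phi>: "exp 2 \<le> real L * \<phi>\<^sup>2"
    and a: "0 \<le> a" "a \<le> 1 + b + c"
    and lower: "b * (1 + b - c) ^ (L-1) \<le> \<phi>\<^sup>2"
  shows "a ^ (L-1) < real L * \<phi>\<^sup>2 \<and> a ^ (L-1) * b < 2 * \<phi>\<^sup>2"
proof -
  define n where "n = L - 1"
  note c16 = slack_bounds[OF L c, folded n_def]
  have "(1 + b + c) ^ n < 2 * (1 + b - c) ^ n"
    using b c(1) c16 by (intro pow_add_lt_two_mult_pow_diff) auto
  moreover have an: "a ^ n \<le> (1 + b + c) ^ n"
    using a by (intro power_mono) auto
  ultimately have a_lt: "a ^ n < 2 * (1 + b - c) ^ n" by linarith
  have lower': "b * (1 + b - c) ^ n \<le> \<phi>\<^sup>2" using lower unfolding n_def .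
  have "0 < real L * \<phi>\<^sup>2"
    using \<phi> exp_gt_zero[of 2] by linarith
  then have \<phi>_pos: "0 < \<phi>\<^sup>2" by (simp add: zero_less_mult_iff)
  have "a ^ n * b < 2 * \<phi>\<^sup>2"
  proof (cases "b = 0")
    case False
    then have "a ^ n * b < 2 * (1 + b - c) ^ n * b"
      using a_lt b by (intro mult_strict_right_mono) auto
    then show ?thesis using lower' by (simp add: algebra_simps)
  qed (use \<phi>_pos in simp)
  moreover have "a ^ n < real L * \<phi>\<^sup>2"
  proof (cases "2 \<le> real L * b")
    case True
    have "2 * (1 + b - c) ^ n \<le> real L * b * (1 + b - c) ^ n"
      using True c16(1) b by (intro mult_right_mono) auto
    also have "\<dots> \<le> real L * \<phi>\<^sup>2"
      using lower' by (simp add: mult.assoc mult_left_mono)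
    finally show ?thesis using a_lt by linarith
  next
    case False
    then have "(1 + b + c) ^ n < exp 2"
      unfolding n_def using L b c by (intro pow_lt_exp_two) auto
    then show ?thesis using an \<phi> by linarith
  qed
  ultimately show ?thesis unfolding n_def by simp
qed

lemma balance_slack_le:
  fixes L :: nat and \<delta> \<epsilon> \<phi> :: real
  assumes L: "2 \<le> L" and \<phi>: "1 \<le> \<phi>"
    and \<delta>: "\<delta> \<le> 1 / (2 * real L ^ 3 * \<phi>\<^sup>2)" and \<epsilon>: "\<epsilon> \<le> 1 / (4 * real L ^ 2)"
  shows "4 * (real L)\<^sup>2 * (\<epsilon> + real L * max \<delta> 0) \<le> 3"
proof -
  have "4 * (real L)\<^sup>2 * \<epsilon> \<le> 1"
    using \<epsilon> L by (simp add: field_simps)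
  moreover have "real L ^ 3 * max \<delta> 0 \<le> 1 / 2"
  proof -
    have "real L ^ 3 * max \<delta> 0 \<le> 1 / (2 * \<phi>\<^sup>2)"
      using \<delta> L \<phi> by (simp add: field_simps max_def)
    also have "\<dots> \<le> 1 / 2" using \<phi> by (simp add: field_simps)
    finally show ?thesis .
  qed
  ultimately show ?thesis
    by (simp add: power2_eq_square power3_eq_cube algebra_simps)
qed

lemma exp_two_le_mult_sq:
  assumes "2 \<le> L" "exp 1 / sqrt (real L) \<le> \<phi>"
  shows "exp 2 \<le> real L * \<phi>\<^sup>2"
proof -
  have "(exp 1 / sqrt (real L))\<^sup>2 \<le> \<phi>\<^sup>2"
    using assms(2) by (intro power_mono) auto
  moreover have "(exp 1 / sqrt (real L))\<^sup>2 = exp 2 / real L"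
    using assms(1) by (simp add: power_divide exp_double[symmetric])
  ultimately show ?thesis
    using assms(1) by (simp add: divide_le_eq mult.commute)
qed

theorem lemma7:
  fixes W :: "nat \<Rightarrow> real^'n^'n" and L :: nat and \<delta> \<epsilon> :: real
  assumes hL: "L \<ge> 2"
    and hD: "\<And>l. 1 \<le> l \<Longrightarrow> l \<le> L - 2 \<Longrightarrow>
               spec_norm (transpose (W (l+1)) ** W (l+1) - W l ** transpose (W l)) \<le> \<delta>"
    and hE: "spec_norm (mat 1 + (transpose (W L) ** W L - W (L-1) ** transpose (W (L-1)))) \<le> \<epsilon>"
    and h\<delta>: "\<delta> \<le> 1 / (2 * real L ^ 3 *
               (max (max (spec_norm (prod_mats W L)) (exp 1 / sqrt (real L))) 1)\<^sup>2)"
    and h\<epsilon>: "\<epsilon> \<le> 1 / (4 * real L ^ 2)"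
  shows "let \<alpha> = max (Max ((\<lambda>l. spec_norm (W l)) ` {1..L-1})) 1;
             \<beta> = spec_norm (W L);
             \<phi> = max (max (spec_norm (prod_mats W L)) (exp 1 / sqrt (real L))) 1
         in \<alpha> ^ (2*(L-1)) < real L * \<phi>\<^sup>2 \<and> \<alpha> ^ (2*(L-1)) * \<beta>\<^sup>2 < 2 * \<phi>\<^sup>2"
proof -
  interpret near_balanced W L \<delta> \<epsilon>
    using hL hD hE by unfold_locales
  define \<alpha> where "\<alpha> = max (Max ((\<lambda>l. spec_norm (W l)) ` {1..L-1})) 1"
  define \<beta> where "\<beta> = spec_norm (W L)"
  define \<phi> where "\<phi> = max (max (spec_norm (prod_mats W L)) (exp 1 / sqrt (real L))) 1"
  define c where "c = \<epsilon> + real L * max \<delta> 0"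
  have \<phi>: "1 \<le> \<phi>" "exp 1 / sqrt (real L) \<le> \<phi>" "spec_norm (prod_mats W L) \<le> \<phi>"
    unfolding \<phi>_def by auto
  have c: "0 \<le> c" "4 * (real L)\<^sup>2 * c \<le> 3"
    using eps_nonneg balance_slack_le[OF hL \<phi>(1) h\<delta>[folded \<phi>_def] h\<epsilon>] unfolding c_def by auto
  have "0 < 1 + \<beta>\<^sup>2 - c"
    using slack_bounds(1)[OF hL c] zero_le_power2[of \<beta>] by linarith
  then have "\<beta>\<^sup>2 * (1 + \<beta>\<^sup>2 - c) ^ (L-1) \<le> (spec_norm (prod_mats W L))\<^sup>2"
    unfolding \<beta>_def c_def by (intro spec_norm_prod_mats_lower) auto
  also have "\<dots> \<le> \<phi>\<^sup>2"
    using \<phi>(3) spec_norm_nonneg by (intro power_mono) auto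
  finally have "(\<alpha>\<^sup>2) ^ (L-1) < real L * \<phi>\<^sup>2 \<and> (\<alpha>\<^sup>2) ^ (L-1) * \<beta>\<^sup>2 < 2 * \<phi>\<^sup>2"
    using max_spec_norm_sq_le exp_two_le_mult_sq[OF hL \<phi>(2)] c hL
    unfolding \<alpha>_def \<beta>_def c_def by (intro weight_growth_bounds) (auto simp: add.assoc)
  then show ?thesis
    unfolding Let_def \<alpha>_def[symmetric] \<beta>_def[symmetric] \<phi>_def[symmetric] by (simp add: power_mult)
qed

end
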